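(* Let $d\in\mathbb{N}$, $\kappa\in(0,\infty)$, and let $\mathfrak{l}\colon\mathbb{R}^d\times\mathbb{R}^d\to\mathbb{R}$ satisfy $\mathfrak{l}(\theta,\vartheta)=\frac{\kappa}{2}\|\theta-\vartheta\|^2$ for all $\theta,\vartheta\in\mathbb{R}^d$. Let $(\Omega,\mathcal{F},\mathbb{P})$ be a probability space, let $X_{n,m}\colon\Omega\to\mathbb{R}^d$, $n,m\in\mathbb{Z}$, be i.i.d. random variables with $\sup_{n,m\in\mathbb{Z}}\|X_{n,m}(\omega)\|<\infty$ for every $\omega\in\Omega$, let $M\in\mathbb{N}$, $\gamma\in(0,2/\kappa)$, let $\Theta\colon\mathbb{N}_0\times\Omega\to\mathbb{R}^d$ satisfy for all $n\in\mathbb{N}$ $$\Theta_n=\Theta_{n-1}-\frac{\gamma}{M}\Big[\sum_{m=1}^M(\nabla_\theta\mathfrak{l})(\Theta_{n-1},X_{n,m})\Big],$$ and let $k\in\mathbb{Z}$ satisfy $$\Theta_0=\sum_{n=0}^\infty\frac{\kappa\gamma(1-\kappa\gamma)^n}{M}\Big[\sum_{m=k+1}^{k+M}X_{-n,m}\Big].$$ Then $$\sup_{n\in\mathbb{N}_0}\|\Theta_n\|\le\frac{2}{2-\kappa\gamma}\Big[\sup_{v,w\in\mathbb{Z}}\|X_{v,w}\|\Big].$$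
   Context: $\|\cdot\|$ is the Euclidean norm; $\nabla_\theta\mathfrak{l}$ is the gradient in the first argument. *)

theory Defs
  imports "HOL-Probability.Probability"
begin

end

theory Submission
  imports Defs
begin

(* For the quadratic loss the SGD step is the affine map
   \<Theta>\<^sub>n = (1 - \<kappa>\<gamma>) \<Theta>\<^sub>n\<^sub>-\<^sub>1 + \<kappa>\<gamma> (mean of M samples),
   so with S the supremum of the norms of the samples,
   |\<Theta>\<^sub>n| \<le> |1 - \<kappa>\<gamma>| |\<Theta>\<^sub>n\<^sub>-\<^sub>1| + \<kappa>\<gamma> S.
   The initial value is a geometric series with the same weights and already lies below the
   fixed point \<kappa>\<gamma> S / (1 - |1 - \<kappa>\<gamma>|) of this bound, hence so does every \<Theta>\<^sub>n.
   Since 1 - |1 - x| = min x (2 - x), that fixed point is at most 2 S / (2 - \<kappa>\<gamma>). *)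

lemma has_derivative_scaled_half_sq_dist:
  fixes \<theta> \<eta> :: "'a::real_inner"
  shows "((\<lambda>t. \<kappa> / 2 * (norm (t - \<eta>))\<^sup>2) has_derivative (\<lambda>h. inner (\<kappa> *\<^sub>R (\<theta> - \<eta>)) h)) (at \<theta>)"
proof -
  have "((\<lambda>t. \<kappa> / 2 * inner (t - \<eta>) (t - \<eta>)) has_derivative
          (\<lambda>h. inner (\<kappa> *\<^sub>R (\<theta> - \<eta>)) h)) (at \<theta>)"
    by (auto intro!: derivative_eq_intros simp: inner_commute algebra_simps)
  then show ?thesis
    by (simp add: power2_norm_eq_inner)
qed

lemma gradient_unique:
  fixes f :: "'a::real_inner \<Rightarrow> real"
  assumes "(f has_derivative (\<lambda>h. inner a h)) (at x)"
    and "(f has_derivative (\<lambda>h. inner b h)) (at x)"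
  shows "a = b"
  using has_derivative_unique[OF assms] by (metis vector_eq_rdot)

lemma quadratic_loss_sgd_step:
  fixes \<theta> :: "'a::real_vector" and Y :: "'b \<Rightarrow> 'a"
  assumes "finite A" "A \<noteq> {}"
  shows "\<theta> - (\<gamma> / card A) *\<^sub>R (\<Sum>m\<in>A. \<kappa> *\<^sub>R (\<theta> - Y m))
       = (1 - \<kappa> * \<gamma>) *\<^sub>R \<theta> + (\<kappa> * \<gamma> / card A) *\<^sub>R (\<Sum>m\<in>A. Y m)"
proof -
  have card: "real (card A) > 0"
    using assms by (simp add: card_gt_0_iff)
  have sum: "(\<Sum>m\<in>A. \<kappa> *\<^sub>R (\<theta> - Y m)) = \<kappa> *\<^sub>R (real (card A) *\<^sub>R \<theta> - (\<Sum>m\<in>A. Y m))"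
    by (simp add: scaleR_sum_right[symmetric] sum_subtractf sum_constant_scaleR)
  have "\<gamma> / card A * \<kappa> * card A = \<kappa> * \<gamma>"
    using card by simp
  then show ?thesis
    unfolding sum unfolding scaleR_diff_right scaleR_scaleR by (simp add: algebra_simps)
qed

lemma norm_scaled_mean_le:
  fixes Y :: "'b \<Rightarrow> 'a::real_normed_vector"
  assumes "finite A" "A \<noteq> {}" "\<And>m. m \<in> A \<Longrightarrow> norm (Y m) \<le> S"
  shows "norm ((c / card A) *\<^sub>R (\<Sum>m\<in>A. Y m)) \<le> \<bar>c\<bar> * S"
proof -
  have card: "real (card A) > 0"
    using assms by (simp add: card_gt_0_iff)
  have "norm ((c / card A) *\<^sub>R (\<Sum>m\<in>A. Y m)) = \<bar>c\<bar> / card A * norm (\<Sum>m\<in>A. Y m)"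
    by simp
  also have "\<dots> \<le> \<bar>c\<bar> / card A * (card A * S)"
    using sum_norm_le[of A Y "\<lambda>_. S"] assms(3) by (intro mult_left_mono) auto
  also have "\<dots> = \<bar>c\<bar> * S"
    using card by simp
  finally show ?thesis .
qed

lemma norm_quadratic_loss_sgd_step_le:
  fixes \<theta> :: "'a::real_normed_vector" and Y :: "'b \<Rightarrow> 'a"
  assumes "finite A" "A \<noteq> {}" "\<And>m. m \<in> A \<Longrightarrow> norm (Y m) \<le> S" "0 \<le> \<kappa> * \<gamma>"
  shows "norm (\<theta> - (\<gamma> / card A) *\<^sub>R (\<Sum>m\<in>A. \<kappa> *\<^sub>R (\<theta> - Y m)))
           \<le> \<bar>1 - \<kappa> * \<gamma>\<bar> * norm \<theta> + \<kappa> * \<gamma> * S"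
proof -
  have "norm (\<theta> - (\<gamma> / card A) *\<^sub>R (\<Sum>m\<in>A. \<kappa> *\<^sub>R (\<theta> - Y m)))
      \<le> norm ((1 - \<kappa> * \<gamma>) *\<^sub>R \<theta>) + norm ((\<kappa> * \<gamma> / card A) *\<^sub>R (\<Sum>m\<in>A. Y m))"
    unfolding quadratic_loss_sgd_step[OF assms(1,2)] by (rule norm_triangle_ineq)
  also have "\<dots> \<le> \<bar>1 - \<kappa> * \<gamma>\<bar> * norm \<theta> + \<kappa> * \<gamma> * S"
    using norm_scaled_mean_le[OF assms(1-3), where c = "\<kappa> * \<gamma>"] assms(4) by simp
  finally show ?thesis .
qed

lemma sums_norm_le_geometric:
  fixes f :: "nat \<Rightarrow> 'a::banach"
  assumes "f sums s" "\<And>n. norm (f n) \<le> c * \<rho> ^ n" "0 \<le> \<rho>" "\<rho> < 1"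
  shows "norm s \<le> c / (1 - \<rho>)"
proof -
  have "norm s \<le> (\<Sum>n. c * \<rho> ^ n)"
    using assms by (metis norm_suminf_le sums_unique summable_geometric summable_mult
        abs_of_nonneg real_norm_def)
  also have "\<dots> = c / (1 - \<rho>)"
    using assms by (simp add: suminf_mult suminf_geometric)
  finally show ?thesis .
qed

lemma affine_recurrence_le_fixpoint:
  fixes a :: "nat \<Rightarrow> real"
  assumes "a 0 \<le> b / (1 - \<rho>)" "\<And>n. a (Suc n) \<le> \<rho> * a n + b" "0 \<le> \<rho>" "\<rho> < 1"
  shows "a n \<le> b / (1 - \<rho>)"
proof (induction n)
  case 0
  then show ?case using assms(1) .
next
  case (Suc n)
  have "a (Suc n) \<le> \<rho> * (b / (1 - \<rho>)) + b"
    using assms(2)[of n] mult_left_mono[OF Suc.IH assms(3)] by linarith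
  also have "\<dots> = b / (1 - \<rho>)"
    using assms(4) by (simp add: field_simps)
  finally show ?case .
qed

lemma div_one_minus_abs_one_minus_le:
  fixes x :: real
  assumes "0 < x" "x < 2"
  shows "x / (1 - \<bar>1 - x\<bar>) \<le> 2 / (2 - x)"
proof (cases "x \<le> 1")
  case True
  then show ?thesis using assms by (simp add: field_simps)
next
  case False
  have "0 \<le> (x - 2)\<^sup>2"
    by simp
  then show ?thesis
    using False assms by (simp add: field_simps power2_eq_square)
qed

theorem lemma5p4:
  fixes \<kappa> \<gamma> :: real and Mb :: nat and k :: int
    and l :: "'a::euclidean_space \<Rightarrow> 'a \<Rightarrow> real"
    and grad_l :: "'a \<Rightarrow> 'a \<Rightarrow> 'a"
    and P :: "'w measure"
    and X :: "int \<Rightarrow> int \<Rightarrow> 'w \<Rightarrow> 'a"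
    and \<Theta> :: "nat \<Rightarrow> 'w \<Rightarrow> 'a"
  assumes kappa_pos: "\<kappa> > 0"
    and l_def: "\<And>\<theta> \<eta>. l \<theta> \<eta> = \<kappa> / 2 * (norm (\<theta> - \<eta>))\<^sup>2"
    and grad_l: "\<And>\<theta> \<eta>. ((\<lambda>t. l t \<eta>) has_derivative (\<lambda>h. inner (grad_l \<theta> \<eta>) h)) (at \<theta>)"
    and P: "prob_space P"
    and X_rv: "\<And>n m. X n m \<in> borel_measurable P"
    and X_indep: "prob_space.indep_vars P (\<lambda>_. borel) (\<lambda>i. X (fst i) (snd i)) UNIV"
    and X_id: "\<And>n m. distr P borel (X n m) = distr P borel (X 0 0)"
    and X_bdd: "\<And>\<omega>. \<omega> \<in> space P \<Longrightarrow> bdd_above (range (\<lambda>i. norm (X (fst i) (snd i) \<omega>)))"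
    and Mb: "Mb \<ge> 1"
    and gamma: "0 < \<gamma>" "\<gamma> < 2 / \<kappa>"
    and rec: "\<And>n \<omega>. \<omega> \<in> space P \<Longrightarrow> \<Theta> (Suc n) \<omega> = \<Theta> n \<omega> -
        (\<gamma> / real Mb) *\<^sub>R (\<Sum>m\<in>{1..int Mb}. grad_l (\<Theta> n \<omega>) (X (int (Suc n)) m \<omega>))"
    and init: "\<And>\<omega>. \<omega> \<in> space P \<Longrightarrow>
        (\<lambda>n. (\<kappa> * \<gamma> * (1 - \<kappa> * \<gamma>) ^ n / real Mb) *\<^sub>R
               (\<Sum>m\<in>{k+1..k + int Mb}. X (- int n) m \<omega>)) sums \<Theta> 0 \<omega>"
  shows "\<forall>\<omega>\<in>space P. \<forall>n. norm (\<Theta> n \<omega>) \<le>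
           2 / (2 - \<kappa> * \<gamma>) * (SUP i. norm (X (fst i) (snd i) \<omega>))"
proof (intro ballI allI)
  fix \<omega> n assume \<omega>: "\<omega> \<in> space P"
  define S where "S = (SUP i. norm (X (fst i) (snd i) \<omega>))"
  define r where "r = 1 - \<kappa> * \<gamma>"
  have kg: "0 < \<kappa> * \<gamma>" "\<kappa> * \<gamma> < 2"
    using kappa_pos gamma by (auto simp: field_simps)
  have X_le: "norm (X a b \<omega>) \<le> S" for a b
    unfolding S_def using cSUP_upper[OF _ X_bdd[OF \<omega>], of "(a, b)"] by simp
  have grad: "grad_l \<theta> \<eta> = \<kappa> *\<^sub>R (\<theta> - \<eta>)" for \<theta> \<eta>
    using gradient_unique[OF grad_l[unfolded l_def] has_derivative_scaled_half_sq_dist] .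
  have step: "norm (\<Theta> (Suc m) \<omega>) \<le> \<bar>r\<bar> * norm (\<Theta> m \<omega>) + \<kappa> * \<gamma> * S" for m
    using norm_quadratic_loss_sgd_step_le[of "{1..int Mb}" "\<lambda>j. X (int (Suc m)) j \<omega>" S \<kappa> \<gamma>
        "\<Theta> m \<omega>"] X_le Mb kg
    by (simp add: rec[OF \<omega>] grad r_def)
  have init_le: "norm (\<Theta> 0 \<omega>) \<le> \<kappa> * \<gamma> * S / (1 - \<bar>r\<bar>)"
  proof (rule sums_norm_le_geometric[OF init[OF \<omega>]])
    fix j
    show "norm ((\<kappa> * \<gamma> * (1 - \<kappa> * \<gamma>) ^ j / real Mb) *\<^sub>R
            (\<Sum>m\<in>{k + 1..k + int Mb}. X (- int j) m \<omega>)) \<le> \<kappa> * \<gamma> * S * \<bar>r\<bar> ^ j"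
      using norm_scaled_mean_le[of "{k + 1..k + int Mb}" "\<lambda>m. X (- int j) m \<omega>" S
          "\<kappa> * \<gamma> * r ^ j"] X_le Mb kappa_pos gamma(1)
      by (simp add: r_def abs_mult power_abs mult_ac)
  qed (use kg in \<open>auto simp: r_def\<close>)
  have "norm (\<Theta> n \<omega>) \<le> \<kappa> * \<gamma> * S / (1 - \<bar>r\<bar>)"
    using affine_recurrence_le_fixpoint[of "\<lambda>m. norm (\<Theta> m \<omega>)"] init_le step kg
    by (auto simp: r_def)
  also have "\<dots> = \<kappa> * \<gamma> / (1 - \<bar>r\<bar>) * S"
    by simp
  also have "\<dots> \<le> 2 / (2 - \<kappa> * \<gamma>) * S"
    using div_one_minus_abs_one_minus_le[OF kg] X_le[of 0 0] unfolding r_def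
    by (intro mult_right_mono) (auto intro: order_trans[OF norm_ge_zero])
  finally show "norm (\<Theta> n \<omega>) \<le> 2 / (2 - \<kappa> * \<gamma>) * (SUP i. norm (X (fst i) (snd i) \<omega>))"
    unfolding S_def .
qed

end
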